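(* Let $C_0$ be an uncountable subset of $\omega_1$ and for each $\alpha\in C_0$ let $\rho_\alpha,\omega_\alpha:[0,\infty)\to[0,\infty)$ be increasing functions with $\rho_\alpha(t)\le\omega_\alpha(t)$ for all $t\ge0$ and $\lim_{t\to\infty}\rho_\alpha(t)=\infty$. Then there exist increasing functions $\rho,\omega:[0,\infty)\to[0,\infty)$ and a decreasing sequence $C_0\supset C_1\supset C_2\supset\cdots$ of uncountable subsets of $\omega_1$ such that (i) $\rho(t)\le\omega(t)$ for all $t\ge0$ and $\lim_{t\to\infty}\rho(t)=\infty$; (ii) for all $k\in\mathbb{N}$, all $\alpha\in C_k$ and all $0\le t\le k$ we have $\rho(t)\le\rho_\alpha(t)$ and $\omega_\alpha(t)\le\omega(t)$. *)

theory Defs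
  imports Complex_Main "HOL-Library.Countable_Set"
begin

text \<open>The first uncountable ordinal omega_1, realised as the field of the
  canonical well-order cardSuc natLeq (the successor cardinal of aleph_0),
  whose order type is omega_1.\<close>
definition omega1 :: "nat set set" where
  "omega1 = Field (cardSuc natLeq)"

definition incr_nonneg :: "(real \<Rightarrow> real) \<Rightarrow> bool" where
  "incr_nonneg f \<longleftrightarrow> mono_on {0..} f \<and> (\<forall>t\<ge>0. f t \<ge> 0)"

end

theory Submission
  imports Defs
begin

text \<open>Fix a stage k. Since each \<rho>_\<alpha> is unbounded, every \<alpha> eventually (in n) satisfies
  n \<ge> k, \<rho>_\<alpha>(n) \<ge> k and \<omega>_\<alpha>(k) \<le> n. An uncountable set is not a countable union of
  countable sets, so a single threshold N_k works for uncountably many \<alpha>; iterating gives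
  C_0 \<supseteq> C_1 \<supseteq> ... with thresholds N_k \<ge> k valid on C_k. The envelopes are step functions
  of the thresholds: \<rho>(t) is the largest j \<ge> 1 with N_j \<le> t (or 0), and
  \<omega>(t) = t + N_0 + ... + N_(\<lceil>t\<rceil>+1).\<close>

lemma uncountable_eventually_common_index:
  assumes "uncountable C"
    and "\<And>\<alpha>. \<alpha> \<in> C \<Longrightarrow> eventually (P \<alpha>) sequentially"
  shows "\<exists>n. uncountable {\<alpha>\<in>C. P \<alpha> n}"
proof (rule ccontr)
  assume "\<nexists>n. uncountable {\<alpha>\<in>C. P \<alpha> n}"
  then have "countable (\<Union>N. {\<alpha>\<in>C. \<forall>n\<ge>N. P \<alpha> n})"
    by (intro countable_UN) (auto intro: countable_subset[rotated])
  moreover have "C \<subseteq> (\<Union>N. {\<alpha>\<in>C. \<forall>n\<ge>N. P \<alpha> n})"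
    using assms(2) by (auto simp: eventually_sequentially)
  ultimately show False
    using assms(1) countable_subset by blast
qed

lemma uncountable_refinement_sequence:
  fixes C0 :: "'a set" and P :: "nat \<Rightarrow> 'a \<Rightarrow> nat \<Rightarrow> bool"
  assumes "uncountable C0"
    and "\<And>k \<alpha>. \<alpha> \<in> C0 \<Longrightarrow> eventually (P k \<alpha>) sequentially"
  shows "\<exists>(C :: nat \<Rightarrow> 'a set) (N :: nat \<Rightarrow> nat). C 0 = C0 \<and> (\<forall>k. C (Suc k) \<subseteq> C k) \<and>
           (\<forall>k. uncountable (C k)) \<and> (\<forall>k>0. \<forall>\<alpha>\<in>C k. P k \<alpha> (N k))"
proof -
  define index where "index k D = (SOME n. uncountable {\<alpha>\<in>D. P k \<alpha> n})" for k D
  define C where "C = rec_nat C0 (\<lambda>k D. {\<alpha>\<in>D. P (Suc k) \<alpha> (index (Suc k) D)})"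
  define N where "N k = index k (C (k - 1))" for k
  have C_Suc: "C (Suc k) = {\<alpha>\<in>C k. P (Suc k) \<alpha> (N (Suc k))}" for k
    by (simp add: C_def N_def)
  have "C k \<subseteq> C0 \<and> uncountable (C k)" for k
  proof (induction k)
    case 0
    show ?case using assms(1) by (simp add: C_def)
  next
    case (Suc k)
    have "\<exists>n. uncountable {\<alpha>\<in>C k. P (Suc k) \<alpha> n}"
      using Suc assms(2) by (intro uncountable_eventually_common_index) auto
    then have "uncountable {\<alpha>\<in>C k. P (Suc k) \<alpha> (index (Suc k) (C k))}"
      unfolding index_def by (rule someI_ex)
    then show ?case using Suc by (auto simp: C_Suc N_def)
  qed
  moreover have "\<forall>k>0. \<forall>\<alpha>\<in>C k. P k \<alpha> (N k)"
    by (metis (no_types, lifting) C_Suc gr0_conv_Suc mem_Collect_eq)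
  moreover have "C (Suc k) \<subseteq> C k" for k
    unfolding C_Suc by blast
  moreover have "C 0 = C0"
    by (simp add: C_def)
  ultimately show ?thesis
    by blast
qed

lemma eventually_at_top_real_sequentially:
  fixes r :: "real \<Rightarrow> real"
  assumes "filterlim r at_top at_top"
  shows "eventually (\<lambda>n. m \<le> n \<and> a \<le> r (real n) \<and> c \<le> real n) sequentially"
proof -
  have "filterlim (\<lambda>n. r (real n)) at_top sequentially"
    by (rule filterlim_compose[OF assms filterlim_real_sequentially])
  then have "eventually (\<lambda>n. a \<le> r (real n)) sequentially"
    by (simp add: filterlim_at_top)
  moreover have "eventually (\<lambda>n. c \<le> real n) sequentially"
    using filterlim_real_sequentially by (simp add: filterlim_at_top)
  ultimately show ?thesis
    by (intro eventually_conj eventually_ge_at_top)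
qed

lemma incr_nonneg_mono:
  assumes "incr_nonneg f" and "0 \<le> s" "s \<le> t"
  shows "f s \<le> f t"
proof -
  have "mono_on {0..} f"
    using assms(1) by (simp add: incr_nonneg_def)
  then show ?thesis
    by (rule mono_onD) (use assms(2,3) in simp_all)
qed

definition threshold_minorant :: "(nat \<Rightarrow> nat) \<Rightarrow> real \<Rightarrow> real" where
  "threshold_minorant N t = real (Max (insert 0 {j. 0 < j \<and> real (N j) \<le> t}))"

text \<open>The sum runs up to \<lceil>t\<rceil> + 1 so that it contains N_1 even at t = 0.\<close>

definition threshold_majorant :: "(nat \<Rightarrow> nat) \<Rightarrow> real \<Rightarrow> real" where
  "threshold_majorant N t = t + (\<Sum>j\<le>Suc (nat \<lceil>t\<rceil>). real (N j))"

lemma finite_threshold_indices: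
  assumes "\<forall>j>0. j \<le> N j"
  shows "finite {j. 0 < j \<and> real (N j) \<le> t}"
proof (rule finite_subset)
  show "{j. 0 < j \<and> real (N j) \<le> t} \<subseteq> {..nat \<lceil>t\<rceil>}"
  proof
    fix j assume "j \<in> {j. 0 < j \<and> real (N j) \<le> t}"
    then have "j \<le> N j" "real (N j) \<le> t"
      using assms by auto
    then have "real j \<le> t"
      by (rule order_trans[OF of_nat_mono])
    then show "j \<in> {..nat \<lceil>t\<rceil>}"
      by (simp add: le_nat_iff le_ceiling_iff)
  qed
qed simp

lemma threshold_minorant_cases:
  assumes "\<forall>j>0. j \<le> N j"
  obtains (zero) "threshold_minorant N t = 0"
  | (index) J where "threshold_minorant N t = real J" "0 < J" "real (N J) \<le> t"
proof -
  have "Max (insert 0 {j. 0 < j \<and> real (N j) \<le> t}) \<in> insert 0 {j. 0 < j \<and> real (N j) \<le> t}"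
    using finite_threshold_indices[OF assms] by (intro Max_in) auto
  then show ?thesis
  proof
    assume "Max (insert 0 {j. 0 < j \<and> real (N j) \<le> t}) \<in> {j. 0 < j \<and> real (N j) \<le> t}"
    then show ?thesis using that(2) by (simp add: threshold_minorant_def)
  qed (use that(1) in \<open>simp add: threshold_minorant_def\<close>)
qed

lemma threshold_minorant_le:
  assumes "\<forall>j>0. j \<le> N j" and "0 \<le> t"
  shows "threshold_minorant N t \<le> t"
proof (rule threshold_minorant_cases[OF assms(1), of t])
  fix J assume J: "threshold_minorant N t = real J" "0 < J" "real (N J) \<le> t"
  have "J \<le> N J"
    using assms(1) J(2) by simp
  then show ?thesis
    using J by (simp add: order_trans[OF of_nat_mono])
qed (use assms(2) in linarith)

lemma incr_nonneg_threshold_minorant: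
  assumes "\<forall>j>0. j \<le> N j"
  shows "incr_nonneg (threshold_minorant N)"
  unfolding incr_nonneg_def
proof
  show "mono_on {0..} (threshold_minorant N)"
  proof (rule mono_onI)
    fix s t :: real assume "s \<le> t"
    then have "Max (insert 0 {j. 0 < j \<and> real (N j) \<le> s}) \<le> Max (insert 0 {j. 0 < j \<and> real (N j) \<le> t})"
      using finite_threshold_indices[OF assms] by (intro Max_mono) auto
    then show "threshold_minorant N s \<le> threshold_minorant N t"
      by (simp add: threshold_minorant_def)
  qed
qed (simp add: threshold_minorant_def)

lemma threshold_minorant_at_top:
  assumes "\<forall>j>0. j \<le> N j"
  shows "filterlim (threshold_minorant N) at_top at_top"
  unfolding filterlim_at_top
proof
  fix Z :: real
  define j where "j = Suc (nat \<lceil>Z\<rceil>)"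
  have "Z \<le> real j"
    unfolding j_def by (smt (verit) of_nat_Suc real_nat_ceiling_ge)
  moreover have "real j \<le> threshold_minorant N t" if "real (N j) \<le> t" for t
  proof -
    have "j \<in> {j. 0 < j \<and> real (N j) \<le> t}"
      using that by (simp add: j_def)
    then show ?thesis
      using finite_threshold_indices[OF assms] by (simp add: threshold_minorant_def)
  qed
  ultimately show "eventually (\<lambda>t. Z \<le> threshold_minorant N t) at_top"
    by (auto intro: order_trans eventually_mono[OF eventually_ge_at_top])
qed

lemma threshold_minorant_le_incr_nonneg:
  assumes "\<forall>j>0. j \<le> N j" and "incr_nonneg f" and "0 \<le> t" "t \<le> real k"
    and "\<And>j. 0 < j \<Longrightarrow> j \<le> k \<Longrightarrow> real j \<le> f (real (N j))"
  shows "threshold_minorant N t \<le> f t"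
proof (cases rule: threshold_minorant_cases[OF assms(1), of t, case_names zero index])
  case zero
  have "0 \<le> f t" using assms(2,3) by (simp add: incr_nonneg_def)
  then show ?thesis using zero by linarith
next
  case (index J)
  have "J \<le> N J" using assms(1) index(2) by simp
  then have "real J \<le> t" using index(3) by (rule order_trans[OF of_nat_mono])
  then have "J \<le> k" using assms(4) by linarith
  then have "real J \<le> f (real (N J))" using assms(5) index(2) by blast
  also have "\<dots> \<le> f t"
    using index(3) by (intro incr_nonneg_mono[OF assms(2)]) simp_all
  finally show ?thesis using index(1) by linarith
qed

lemma incr_nonneg_threshold_majorant: "incr_nonneg (threshold_majorant N)"
  unfolding incr_nonneg_def
proof
  show "mono_on {0..} (threshold_majorant N)"
  proof (rule mono_onI)
    fix s t :: real assume "s \<le> t"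
    then have "nat \<lceil>s\<rceil> \<le> nat \<lceil>t\<rceil>"
      by (intro nat_mono ceiling_mono)
    then have "(\<Sum>j\<le>Suc (nat \<lceil>s\<rceil>). real (N j)) \<le> (\<Sum>j\<le>Suc (nat \<lceil>t\<rceil>). real (N j))"
      by (intro sum_mono2) auto
    then show "threshold_majorant N s \<le> threshold_majorant N t"
      using \<open>s \<le> t\<close> by (simp add: threshold_majorant_def)
  qed
qed (simp add: threshold_majorant_def sum_nonneg)

lemma le_threshold_majorant: "0 \<le> t \<Longrightarrow> t \<le> threshold_majorant N t"
  by (simp add: threshold_majorant_def sum_nonneg)

lemma mono_on_le_threshold_majorant:
  assumes "mono_on {0..} f" and "0 \<le> t" "t \<le> real k" "0 < k"
    and "\<And>j. 0 < j \<Longrightarrow> j \<le> k \<Longrightarrow> f (real j) \<le> real (N j)"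
  shows "f t \<le> threshold_majorant N t"
proof -
  define j where "j = max 1 (nat \<lceil>t\<rceil>)"
  have "t \<le> real (nat \<lceil>t\<rceil>)"
    by (rule real_nat_ceiling_ge)
  also have "\<dots> \<le> real j"
    by (simp add: j_def)
  finally have "t \<le> real j" .
  moreover have "j \<le> k"
    using assms(3,4) by (simp add: j_def nat_le_iff ceiling_le_iff)
  ultimately have "f t \<le> f (real j)"
    by (intro mono_onD[OF assms(1)]) (use assms(2) in simp_all)
  also have "\<dots> \<le> real (N j)"
    using assms(5) \<open>j \<le> k\<close> by (simp add: j_def)
  also have "\<dots> \<le> (\<Sum>i\<le>Suc (nat \<lceil>t\<rceil>). real (N i))"
  proof (rule member_le_sum)
    have "max 1 n \<le> Suc n" for n :: nat
      by simp
    then show "j \<in> {..Suc (nat \<lceil>t\<rceil>)}"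
      unfolding j_def by blast
  qed simp_all
  also have "\<dots> \<le> threshold_majorant N t"
    using assms(2) by (simp add: threshold_majorant_def)
  finally show ?thesis .
qed

lemma threshold_envelopes:
  assumes "\<forall>j>0. j \<le> N j"
  shows "incr_nonneg (threshold_minorant N)" "incr_nonneg (threshold_majorant N)"
    "\<forall>t\<ge>0. threshold_minorant N t \<le> threshold_majorant N t"
    "filterlim (threshold_minorant N) at_top at_top"
proof -
  show "incr_nonneg (threshold_minorant N)"
    by (rule incr_nonneg_threshold_minorant[OF assms])
  show "incr_nonneg (threshold_majorant N)"
    by (rule incr_nonneg_threshold_majorant)
  show "filterlim (threshold_minorant N) at_top at_top"
    by (rule threshold_minorant_at_top[OF assms])
  show "\<forall>t\<ge>0. threshold_minorant N t \<le> threshold_majorant N t"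
  proof (intro allI impI)
    fix t :: real assume "0 \<le> t"
    then show "threshold_minorant N t \<le> threshold_majorant N t"
      using threshold_minorant_le[OF assms] le_threshold_majorant[of t N] by (meson order_trans)
  qed
qed

lemma threshold_envelope_bounds:
  assumes "\<forall>j>0. j \<le> N j" and "incr_nonneg r" "incr_nonneg w"
    and "0 < k" "0 \<le> t" "t \<le> real k"
    and "\<And>j. 0 < j \<Longrightarrow> j \<le> k \<Longrightarrow> real j \<le> r (real (N j)) \<and> w (real j) \<le> real (N j)"
  shows "threshold_minorant N t \<le> r t \<and> w t \<le> threshold_majorant N t"
proof
  show "threshold_minorant N t \<le> r t"
    by (rule threshold_minorant_le_incr_nonneg[OF assms(1,2,5,6)]) (simp add: assms(7))
  have "mono_on {0..} w"
    using assms(3) by (simp add: incr_nonneg_def)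
  then show "w t \<le> threshold_majorant N t"
    by (rule mono_on_le_threshold_majorant[OF _ assms(5,6,4)]) (simp add: assms(7))
qed

theorem lemma4p1:
  fixes C0 :: "nat set set"
    and rhos omegas :: "nat set \<Rightarrow> real \<Rightarrow> real"
  assumes "C0 \<subseteq> omega1" and "\<not> countable C0"
    and "\<forall>\<alpha>\<in>C0. incr_nonneg (rhos \<alpha>) \<and> incr_nonneg (omegas \<alpha>)"
    and "\<forall>\<alpha>\<in>C0. \<forall>t\<ge>0. rhos \<alpha> t \<le> omegas \<alpha> t"
    and "\<forall>\<alpha>\<in>C0. filterlim (rhos \<alpha>) at_top at_top"
  shows "\<exists>\<rho> \<omega> (C :: nat \<Rightarrow> nat set set).
           incr_nonneg \<rho> \<and> incr_nonneg \<omega> \<and>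
           C 0 = C0 \<and> (\<forall>k. C (Suc k) \<subseteq> C k) \<and>
           (\<forall>k. C k \<subseteq> omega1 \<and> \<not> countable (C k)) \<and>
           (\<forall>t\<ge>0. \<rho> t \<le> \<omega> t) \<and> filterlim \<rho> at_top at_top \<and>
           (\<forall>k\<ge>1. \<forall>\<alpha>\<in>C k. \<forall>t. 0 \<le> t \<and> t \<le> real k \<longrightarrow>
               \<rho> t \<le> rhos \<alpha> t \<and> omegas \<alpha> t \<le> \<omega> t)"
proof -
  define P where "P k \<alpha> n \<longleftrightarrow> k \<le> n \<and> real k \<le> rhos \<alpha> (real n) \<and> omegas \<alpha> (real k) \<le> real n"
    for k \<alpha> n
  have "eventually (P k \<alpha>) sequentially" if "\<alpha> \<in> C0" for k \<alpha>
    unfolding P_def by (rule eventually_at_top_real_sequentially) (use assms(5) that in blast)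
  then obtain C N where C_0: "C 0 = C0" and C_Suc: "\<forall>k. C (Suc k) \<subseteq> C k"
    and C_uncountable: "\<forall>k. uncountable (C k)" and C_good: "\<forall>k>0. \<forall>\<alpha>\<in>C k. P k \<alpha> (N k)"
    using uncountable_refinement_sequence[OF assms(2)] by metis
  have C_antimono: "C k \<subseteq> C j" if "j \<le> k" for j k
    using that by (rule lift_Suc_antimono_le[of C, OF C_Suc[rule_format]])
  have N_ge: "\<forall>j>0. j \<le> N j"
  proof (intro allI impI)
    fix j :: nat assume "0 < j"
    obtain \<alpha> where "\<alpha> \<in> C j"
      using C_uncountable countable_empty ex_in_conv by metis
    then show "j \<le> N j"
      using C_good \<open>0 < j\<close> by (simp add: P_def)
  qed
  have bounds: "threshold_minorant N t \<le> rhos \<alpha> t \<and> omegas \<alpha> t \<le> threshold_majorant N t"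
    if "1 \<le> k" "\<alpha> \<in> C k" "0 \<le> t" "t \<le> real k" for k \<alpha> t
  proof (rule threshold_envelope_bounds[OF N_ge _ _ _ that(3,4)])
    show "incr_nonneg (rhos \<alpha>)" "incr_nonneg (omegas \<alpha>)"
      using assms(3) C_antimono[of 0 k] C_0 that(2) by auto
    show "0 < k"
      using that(1) by simp
    fix j assume "0 < j" "j \<le> k"
    then show "real j \<le> rhos \<alpha> (real (N j)) \<and> omegas \<alpha> (real j) \<le> real (N j)"
      using C_good C_antimono[OF \<open>j \<le> k\<close>] that(2) unfolding P_def by blast
  qed
  have "C k \<subseteq> omega1" for k
    using C_antimono[of 0 k] C_0 assms(1) by auto
  then show ?thesis
    using C_0 C_Suc C_uncountable threshold_envelopes[OF N_ge] bounds
    by (intro exI[of _ "threshold_minorant N", OF exI[of _ "threshold_majorant N", OF exI[of _ C]]])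
      simp
qed

end
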